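(* Let $P=(Q,I,M,\Delta)$ be a broadcast protocol and consider a run of the saturation algorithm on $P$, with $S_0=I,S_1,\dots,S_m$ the values of the set $S$ after each iteration and $c_0=|I|,c_1,\dots,c_m$ the corresponding values of the counter $c$. For every $0\le i\le m$, there exist an initial configuration $\gamma_0$, a configuration $\gamma=(V,E,L)$ and a reconfigurable execution $\rho$ from $\gamma_0$ to $\gamma$ such that $L(\gamma)=S_i$, $\rho$ has exactly $c_i$ nodes, and every node has active length at most $i$ along $\rho$.
   Context: A broadcast protocol is a tuple $P=(Q,I,M,\Delta)$ where $Q$ is a finite set of states, $I\subseteq Q$ initial states, $M$ a finite message alphabet and $\Delta\subseteq Q\times\{!!m,\ ??m \mid m\in M\}\times Q$ ($!!m$ = broadcast, $??m$ = reception). Protocols are complete for receptions: for every $q$, $m$ there is $q'$ with $(q,??m,q')\in\Delta$. A configuration is a finite undirected graph $\gamma=(V,E,L)$, $E$ symmetric irreflexive, $L:V\to Q$; $L(\gamma)=L(V)$; $\gamma$ is initial if $L(V)\subseteq I$. A reconfigurable step goes from $\gamma=(V,E,L)$ to $\gamma'=(V,E',L')$ ($E'$ arbitrary) if there exist a node $v$ and $m\in M$ with $(L(v),!!m,L'(v))\in\Delta$ and for every $v'\neq v$: if $v'$ is a neighbour of $v$ in $E$ then $(L(v'),??m,L'(v'))\in\Delta$, otherwise $L'(v')=L(v')$; $v$ broadcasts in this step. A reconfigurable execution is a sequence of configurations over a fixed node set starting from an initial one with consecutive reconfigurable steps; its number of nodes is $|V|$; the active length of a node $v$ is the number of steps in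 which $v$ broadcasts. The saturation algorithm: start with $S:=I$, $c:=|I|$; repeat: if there is $(q_1,!!m,q_2)\in\Delta$ with $q_1\in S$, $q_2\notin S$, add $q_2$ to $S$ and $c:=c+1$; else if there are $(q_1,!!m,q_2),(q_1',??m,q_2')\in\Delta$ with $q_1,q_2,q_1'\in S$, $q_2'\notin S$, add $q_2'$ and $c:=c+2$; else stop and return $S$. Each iteration adds exactly one state. *)

theory Defs
  imports Main
begin

datatype 'm action = Bcast 'm | Recv 'm

fun msg_of :: "'m action \<Rightarrow> 'm" where
  "msg_of (Bcast m) = m" | "msg_of (Recv m) = m"

definition broadcast_protocol ::
  "'q set \<Rightarrow> 'q set \<Rightarrow> 'm set \<Rightarrow> ('q \<times> 'm action \<times> 'q) set \<Rightarrow> bool" where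
  "broadcast_protocol Q I M \<Delta> \<longleftrightarrow>
     finite Q \<and> finite M \<and> I \<subseteq> Q \<and>
     (\<forall>(q, a, q') \<in> \<Delta>. q \<in> Q \<and> q' \<in> Q \<and> msg_of a \<in> M) \<and>
     (\<forall>q \<in> Q. \<forall>m \<in> M. \<exists>q'. (q, Recv m, q') \<in> \<Delta>)"

type_synonym 'q config = "nat set \<times> (nat \<times> nat) set \<times> (nat \<Rightarrow> 'q)"

definition is_config :: "'q set \<Rightarrow> 'q config \<Rightarrow> bool" where
  "is_config Q \<gamma> = (case \<gamma> of (V, E, L) \<Rightarrow>
     finite V \<and> E \<subseteq> V \<times> V \<and> sym E \<and> irrefl E \<and> L ` V \<subseteq> Q)"

definition nodes :: "'q config \<Rightarrow> nat set" where
  "nodes \<gamma> = fst \<gamma>"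

definition labels :: "'q config \<Rightarrow> 'q set" where
  "labels \<gamma> = (case \<gamma> of (V, E, L) \<Rightarrow> L ` V)"

definition initial_config :: "'q set \<Rightarrow> 'q set \<Rightarrow> 'q config \<Rightarrow> bool" where
  "initial_config Q I \<gamma> \<longleftrightarrow> is_config Q \<gamma> \<and> labels \<gamma> \<subseteq> I"

definition rstep ::
  "'q set \<Rightarrow> ('q \<times> 'm action \<times> 'q) set \<Rightarrow> 'q config \<Rightarrow> nat \<Rightarrow> 'm \<Rightarrow> 'q config \<Rightarrow> bool" where
  "rstep Q \<Delta> \<gamma> v m \<gamma>' = (case \<gamma> of (V, E, L) \<Rightarrow> case \<gamma>' of (V', E', L') \<Rightarrow>
     is_config Q \<gamma> \<and> is_config Q \<gamma>' \<and> V' = V \<and> v \<in> V \<and>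
     (L v, Bcast m, L' v) \<in> \<Delta> \<and>
     (\<forall>v' \<in> V. v' \<noteq> v \<longrightarrow>
        (if (v, v') \<in> E then (L v', Recv m, L' v') \<in> \<Delta> else L' v' = L v')))"

text \<open>A reconfigurable execution: a list of configurations gs together with the list bs
  of the nodes broadcasting in each step (length gs = length bs + 1).\<close>
definition rexec ::
  "'q set \<Rightarrow> 'q set \<Rightarrow> ('q \<times> 'm action \<times> 'q) set \<Rightarrow> 'q config list \<Rightarrow> nat list \<Rightarrow> bool" where
  "rexec Q I \<Delta> gs bs \<longleftrightarrow>
     length gs = Suc (length bs) \<and> initial_config Q I (gs ! 0) \<and>
     (\<forall>k < length bs. \<exists>m. rstep Q \<Delta> (gs ! k) (bs ! k) m (gs ! Suc k))"

definition active_length :: "nat list \<Rightarrow> nat \<Rightarrow> nat" where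
  "active_length bs v = length (filter (\<lambda>u. u = v) bs)"

definition rule1 :: "('q \<times> 'm action \<times> 'q) set \<Rightarrow> 'q set \<Rightarrow> 'q \<Rightarrow> bool" where
  "rule1 \<Delta> S q2 \<longleftrightarrow> (\<exists>q1 m. (q1, Bcast m, q2) \<in> \<Delta> \<and> q1 \<in> S \<and> q2 \<notin> S)"

definition rule2 :: "('q \<times> 'm action \<times> 'q) set \<Rightarrow> 'q set \<Rightarrow> 'q \<Rightarrow> bool" where
  "rule2 \<Delta> S q2' \<longleftrightarrow> (\<exists>q1 q2 q1' m. (q1, Bcast m, q2) \<in> \<Delta> \<and> (q1', Recv m, q2') \<in> \<Delta> \<and>
      q1 \<in> S \<and> q2 \<in> S \<and> q1' \<in> S \<and> q2' \<notin> S)"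

definition sat_step ::
  "('q \<times> 'm action \<times> 'q) set \<Rightarrow> 'q set \<Rightarrow> nat \<Rightarrow> 'q set \<Rightarrow> nat \<Rightarrow> bool" where
  "sat_step \<Delta> S c S' c' \<longleftrightarrow>
     (\<exists>q. rule1 \<Delta> S q \<and> S' = insert q S \<and> c' = c + 1) \<or>
     ((\<nexists>q. rule1 \<Delta> S q) \<and> (\<exists>q. rule2 \<Delta> S q \<and> S' = insert q S \<and> c' = c + 2))"

definition sat_stops :: "('q \<times> 'm action \<times> 'q) set \<Rightarrow> 'q set \<Rightarrow> bool" where
  "sat_stops \<Delta> S \<longleftrightarrow> (\<nexists>q. rule1 \<Delta> S q) \<and> (\<nexists>q. rule2 \<Delta> S q)"

definition sat_run ::
  "'q set \<Rightarrow> ('q \<times> 'm action \<times> 'q) set \<Rightarrow> (nat \<Rightarrow> 'q set) \<Rightarrow> (nat \<Rightarrow> nat) \<Rightarrow> nat \<Rightarrow> bool" where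
  "sat_run I \<Delta> S c m \<longleftrightarrow>
     S 0 = I \<and> c 0 = card I \<and>
     (\<forall>i < m. sat_step \<Delta> (S i) (c i) (S (Suc i)) (c (Suc i))) \<and>
     sat_stops \<Delta> (S m)"

end

theory Submission
  imports Defs
begin

(* Copycat argument: in a reconfigurable execution any node v can be shadowed by a fresh clone w
   that ends in the same state and broadcasts exactly as often as v. The clone is linked to every
   broadcaster whose message v receives, and replays each broadcast of v in isolation right after
   it. A rule-1 iteration then clones a node in q1 and lets the clone broadcast alone; a rule-2
   iteration clones a node in q1 and one in q1', links the two clones, and lets the first
   broadcast to the second. Each iteration thus adds 1 resp. 2 nodes and at most one broadcast
   per node. *)

lemma active_length_snoc:
  "active_length (bs @ [b]) u = active_length bs u + (if b = u then 1 else 0)"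
  by (simp add: active_length_def)

lemma rexec_Nil_iff: "rexec Q I \<Delta> gs [] \<longleftrightarrow> (\<exists>\<gamma>. gs = [\<gamma>] \<and> initial_config Q I \<gamma>)"
  by (auto simp: rexec_def length_Suc_conv)

lemma rexec_snoc_iff:
  "rexec Q I \<Delta> (gs @ [\<gamma>]) (bs @ [b]) \<longleftrightarrow> rexec Q I \<Delta> gs bs \<and> (\<exists>m. rstep Q \<Delta> (last gs) b m \<gamma>)"
proof (cases "length gs = Suc (length bs)")
  case True
  then have "gs \<noteq> []" by auto
  with True have "last gs = gs ! length bs" by (simp add: last_conv_nth)
  with True \<open>gs \<noteq> []\<close> show ?thesis
    unfolding rexec_def length_append_singleton All_less_Suc by (auto simp: nth_append)
qed (auto simp: rexec_def)

lemma rexec_snocE: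
  assumes "rexec Q I \<Delta> gs (bs @ [b])"
  obtains gs0 \<gamma> m where "gs = gs0 @ [\<gamma>]" "rexec Q I \<Delta> gs0 bs" "rstep Q \<Delta> (last gs0) b m \<gamma>"
proof -
  have "gs \<noteq> []" using assms by (auto simp: rexec_def)
  then obtain gs0 \<gamma> where "gs = gs0 @ [\<gamma>]" by (metis rev_exhaust)
  with assms that show thesis by (auto simp: rexec_snoc_iff)
qed

lemma rexec_last:
  "rexec Q I \<Delta> gs bs \<Longrightarrow> nodes (last gs) = nodes (gs ! 0) \<and> is_config Q (last gs)"
proof (induction bs arbitrary: gs rule: rev_induct)
  case Nil
  then show ?case by (auto simp: rexec_Nil_iff initial_config_def)
next
  case (snoc b bs)
  then obtain gs0 \<gamma> m where gs: "gs = gs0 @ [\<gamma>]" and r: "rexec Q I \<Delta> gs0 bs"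
    and s: "rstep Q \<Delta> (last gs0) b m \<gamma>" by (auto elim: rexec_snocE)
  have "gs0 \<noteq> []" using r by (auto simp: rexec_def)
  moreover have "nodes \<gamma> = nodes (last gs0) \<and> is_config Q \<gamma>"
    using s by (cases "last gs0"; cases \<gamma>) (simp add: rstep_def nodes_def)
  ultimately show ?case using snoc.IH[OF r] gs by (simp add: nth_append)
qed

lemma rstep_isolated:
  assumes "is_config Q (V, E, L)" "is_config Q (V, E', L(u := q))" "u \<in> V"
    "\<forall>x. (u, x) \<notin> E" "(L u, Bcast m, q) \<in> \<Delta>"
  shows "rstep Q \<Delta> (V, E, L) u m (V, E', L(u := q))"
  using assms by (simp add: rstep_def)

lemma rstep_add_node:
  assumes "rstep Q \<Delta> (V, E, L) b m (V, E', L')" "w \<notin> V"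
    "is_config Q (insert w V, F, L(w := x))" "is_config Q (insert w V, F', L'(w := x'))"
    "\<forall>u \<in> V. (b, u) \<in> F \<longleftrightarrow> (b, u) \<in> E"
    "if (b, w) \<in> F then (x, Recv m, x') \<in> \<Delta> else x' = x"
  shows "rstep Q \<Delta> (insert w V, F, L(w := x)) b m (insert w V, F', L'(w := x'))"
proof -
  have "b \<noteq> w" using assms(1,2) by (auto simp: rstep_def)
  with assms show ?thesis by (auto simp: rstep_def)
qed

lemma rstep_clone_receiver:
  assumes "rstep Q \<Delta> (V, E0, L0) b m (V, E, L)" "v \<in> V" "b \<noteq> v" "w \<notin> V"
    "is_config Q (insert w V, E', L(w := L v))"
  shows "\<exists>F. is_config Q (insert w V, F, L0(w := L0 v)) \<and>
           rstep Q \<Delta> (insert w V, F, L0(w := L0 v)) b m (insert w V, E', L(w := L v))"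
proof -
  define F where "F = (if (b, v) \<in> E0 then insert (b, w) (insert (w, b) E0) else E0)"
  from assms(1) have cfg0: "is_config Q (V, E0, L0)" and "b \<in> V"
    and recv: "\<forall>u \<in> V. u \<noteq> b \<longrightarrow> (if (b, u) \<in> E0 then (L0 u, Recv m, L u) \<in> \<Delta> else L u = L0 u)"
    by (auto simp: rstep_def)
  with assms(2,4) have cfgF: "is_config Q (insert w V, F, L0(w := L0 v))"
    by (auto simp: is_config_def F_def sym_def irrefl_def)
  moreover have "rstep Q \<Delta> (insert w V, F, L0(w := L0 v)) b m (insert w V, E', L(w := L v))"
    using recv assms(2-4) cfg0
    by (intro rstep_add_node[OF assms(1,4) cfgF assms(5)]) (auto simp: F_def is_config_def)
  ultimately show ?thesis by blast
qed

lemma rstep_clone_broadcaster: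
  assumes "rstep Q \<Delta> (V, E0, L0) v m (V, E, L)" "w \<notin> V"
    "is_config Q (insert w V, E', L(w := L v))"
  shows "is_config Q (insert w V, E0, L0(w := L0 v))"
    and "rstep Q \<Delta> (insert w V, E0, L0(w := L0 v)) v m (insert w V, {}, L(w := L0 v))"
    and "rstep Q \<Delta> (insert w V, {}, L(w := L0 v)) w m (insert w V, E', L(w := L v))"
proof -
  from assms(1) have cfg0: "is_config Q (V, E0, L0)" and cfg: "is_config Q (V, E, L)"
    and "v \<in> V" and bcast: "(L0 v, Bcast m, L v) \<in> \<Delta>"
    by (auto simp: rstep_def)
  show cfgE0: "is_config Q (insert w V, E0, L0(w := L0 v))"
    using cfg0 \<open>v \<in> V\<close> by (auto simp: is_config_def)
  have cfg\<gamma>: "is_config Q (insert w V, {}, L(w := L0 v))"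
    using cfg cfg0 \<open>v \<in> V\<close> by (auto simp: is_config_def)
  show "rstep Q \<Delta> (insert w V, E0, L0(w := L0 v)) v m (insert w V, {}, L(w := L0 v))"
    using assms(2) cfg0 by (intro rstep_add_node[OF assms(1,2) cfgE0 cfg\<gamma>]) (auto simp: is_config_def)
  show "rstep Q \<Delta> (insert w V, {}, L(w := L0 v)) w m (insert w V, E', L(w := L v))"
    using rstep_isolated[OF cfg\<gamma>, of E' w "L v" m \<Delta>] assms(3) bcast by simp
qed

lemma rexec_clone:
  assumes "rexec Q I \<Delta> gs bs" "last gs = (V, E, L)" "v \<in> V" "w \<notin> V"
    "is_config Q (insert w V, E', L(w := L v))"
  shows "\<exists>gs' bs'. rexec Q I \<Delta> gs' bs' \<and> last gs' = (insert w V, E', L(w := L v)) \<and>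
           active_length bs' = (active_length bs)(w := active_length bs v)"
  using assms
proof (induction bs arbitrary: gs V E L E' rule: rev_induct)
  case Nil
  then have "initial_config Q I (V, E, L)" by (auto simp: rexec_Nil_iff)
  moreover have "labels (insert w V, E', L(w := L v)) = labels (V, E, L)"
    using Nil.prems(3,4) by (auto simp: labels_def)
  ultimately have "initial_config Q I (insert w V, E', L(w := L v))"
    using Nil.prems(5) by (simp add: initial_config_def fun_upd_def)
  then have "rexec Q I \<Delta> [(insert w V, E', L(w := L v))] []" by (simp add: rexec_Nil_iff)
  then show ?case by (fastforce simp: active_length_def)
next
  case (snoc b bs)
  note v = \<open>v \<in> V\<close> and w = \<open>w \<notin> V\<close> and cfg' = snoc.prems(5)
  obtain gs0 m where r: "rexec Q I \<Delta> gs0 bs" and s: "rstep Q \<Delta> (last gs0) b m (V, E, L)"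
    using snoc.prems(1,2) by (auto elim: rexec_snocE)
  obtain E0 L0 where last0: "last gs0 = (V, E0, L0)"
    using s by (cases "last gs0") (auto simp: rstep_def)
  from s have s0: "rstep Q \<Delta> (V, E0, L0) b m (V, E, L)" and "b \<noteq> w"
    using last0 w by (auto simp: rstep_def)
  show ?case
  proof (cases "b = v")
    case False
    obtain F where cfgF: "is_config Q (insert w V, F, L0(w := L0 v))"
      and step: "rstep Q \<Delta> (insert w V, F, L0(w := L0 v)) b m (insert w V, E', L(w := L v))"
      using rstep_clone_receiver[OF s0 v False w cfg'] by blast
    obtain gs' bs' where r': "rexec Q I \<Delta> gs' bs'" and "last gs' = (insert w V, F, L0(w := L0 v))"
      and act': "active_length bs' = (active_length bs)(w := active_length bs v)"
      using snoc.IH[OF r last0 v w cfgF] by blast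
    with step have "rexec Q I \<Delta> (gs' @ [(insert w V, E', L(w := L v))]) (bs' @ [b])"
      by (auto simp: rexec_snoc_iff)
    moreover have "active_length (bs' @ [b]) = (active_length (bs @ [b]))(w := active_length (bs @ [b]) v)"
      using act' False \<open>b \<noteq> w\<close> by (auto simp: fun_eq_iff active_length_def)
    ultimately show ?thesis by fastforce
  next
    case True
    note clone = rstep_clone_broadcaster[OF s0[unfolded True] w cfg']
    obtain gs' bs' where r': "rexec Q I \<Delta> gs' bs'" and "last gs' = (insert w V, E0, L0(w := L0 v))"
      and act': "active_length bs' = (active_length bs)(w := active_length bs v)"
      using snoc.IH[OF r last0 v w clone(1)] by blast
    with clone(2,3) have "rexec Q I \<Delta> ((gs' @ [(insert w V, {}, L(w := L0 v))]) @ [(insert w V, E', L(w := L v))])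
        ((bs' @ [v]) @ [w])"
      unfolding rexec_snoc_iff by auto
    moreover have "active_length ((bs' @ [v]) @ [w]) = (active_length (bs @ [b]))(w := active_length (bs @ [b]) v)"
      using act' True \<open>b \<noteq> w\<close> by (auto simp: fun_eq_iff active_length_def)
    ultimately show ?thesis by fastforce
  qed
qed

definition realizable ::
  "'q set \<Rightarrow> 'q set \<Rightarrow> ('q \<times> 'm action \<times> 'q) set \<Rightarrow> 'q set \<Rightarrow> nat \<Rightarrow> nat \<Rightarrow> bool" where
  "realizable Q I \<Delta> S n k \<longleftrightarrow> (\<exists>gs bs. rexec Q I \<Delta> gs bs \<and>
     labels (last gs) = S \<and> card (nodes (gs ! 0)) = n \<and>
     (\<forall>v \<in> nodes (gs ! 0). active_length bs v \<le> k))"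

lemma realizableI:
  assumes "rexec Q I \<Delta> gs bs" "last gs = (V, E, L)" "L ` V = S" "card V = n"
    "\<forall>v \<in> V. active_length bs v \<le> k"
  shows "realizable Q I \<Delta> S n k"
proof -
  have "nodes (gs ! 0) = V" using rexec_last[OF assms(1)] assms(2) by (simp add: nodes_def)
  with assms show ?thesis unfolding realizable_def labels_def by fastforce
qed

lemma realizableE:
  assumes "realizable Q I \<Delta> S n k"
  obtains gs bs V E L where "rexec Q I \<Delta> gs bs" "last gs = (V, E, L)" "is_config Q (V, E, L)"
    "L ` V = S" "card V = n" "\<forall>v \<in> V. active_length bs v \<le> k"
proof -
  obtain gs bs where r: "rexec Q I \<Delta> gs bs" and lab: "labels (last gs) = S"
    and card: "card (nodes (gs ! 0)) = n" and act: "\<forall>v \<in> nodes (gs ! 0). active_length bs v \<le> k"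
    using assms unfolding realizable_def by blast
  obtain V E L where last: "last gs = (V, E, L)" by (cases "last gs") auto
  have "nodes (gs ! 0) = V" "is_config Q (V, E, L)"
    using rexec_last[OF r] last by (auto simp: nodes_def)
  with that r last lab card act show thesis by (simp add: labels_def)
qed

lemma realizable_initial:
  assumes "broadcast_protocol Q I M \<Delta>"
  shows "realizable Q I \<Delta> I (card I) 0"
proof -
  have "I \<subseteq> Q" "finite I"
    using assms finite_subset unfolding broadcast_protocol_def by blast+
  obtain L where L: "bij_betw L {0..<card I} I"
    using ex_bij_betw_nat_finite[OF \<open>finite I\<close>] by blast
  then have "L ` {0..<card I} = I" by (simp add: bij_betw_def)
  with \<open>I \<subseteq> Q\<close> have "rexec Q I \<Delta> [({0..<card I}, {}, L)] []"
    by (auto simp: rexec_Nil_iff initial_config_def is_config_def labels_def)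
  then show ?thesis
    using \<open>L ` {0..<card I} = I\<close> by (intro realizableI) (auto simp: active_length_def)
qed

lemma realizable_rule1:
  assumes "broadcast_protocol Q I M \<Delta>" "realizable Q I \<Delta> S n k" "rule1 \<Delta> S q"
  shows "realizable Q I \<Delta> (insert q S) (Suc n) (Suc k)"
proof -
  obtain q1 m where t: "(q1, Bcast m, q) \<in> \<Delta>" and "q1 \<in> S"
    using assms(3) unfolding rule1_def by blast
  have "q \<in> Q" using assms(1) t unfolding broadcast_protocol_def by blast
  obtain gs bs V E L where r: "rexec Q I \<Delta> gs bs" and last: "last gs = (V, E, L)"
    and cfg: "is_config Q (V, E, L)" and S: "L ` V = S" and n: "card V = n"
    and act: "\<forall>v \<in> V. active_length bs v \<le> k"
    using realizableE[OF assms(2)] by blast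
  from cfg have "finite V" "L ` V \<subseteq> Q" by (auto simp: is_config_def)
  obtain v where v: "v \<in> V" "L v = q1" using \<open>q1 \<in> S\<close> S by auto
  obtain w where w: "w \<notin> V" using ex_new_if_finite[OF infinite_UNIV_nat \<open>finite V\<close>] by blast
  have cfg1: "is_config Q (insert w V, {}, L(w := L v))"
    using \<open>finite V\<close> \<open>L ` V \<subseteq> Q\<close> v by (auto simp: is_config_def)
  obtain gs' bs' where r': "rexec Q I \<Delta> gs' bs'" and last': "last gs' = (insert w V, {}, L(w := L v))"
    and act': "active_length bs' = (active_length bs)(w := active_length bs v)"
    using rexec_clone[OF r last v(1) w cfg1] by blast
  have cfg2: "is_config Q (insert w V, {}, L(w := q))"
    using \<open>finite V\<close> \<open>L ` V \<subseteq> Q\<close> \<open>q \<in> Q\<close> by (auto simp: is_config_def)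
  have "rstep Q \<Delta> (last gs') w m (insert w V, {}, L(w := q))"
    unfolding last' using rstep_isolated[OF cfg1, of "{}" w q m \<Delta>] cfg2 t v by simp
  with r' have "rexec Q I \<Delta> (gs' @ [(insert w V, {}, L(w := q))]) (bs' @ [w])"
    by (auto simp: rexec_snoc_iff)
  then show ?thesis
  proof (rule realizableI)
    show "L(w := q) ` insert w V = insert q S" using S w by auto
    show "card (insert w V) = Suc n" using \<open>finite V\<close> w n by simp
    show "\<forall>u \<in> insert w V. active_length (bs' @ [w]) u \<le> Suc k"
      using act act' v by (auto simp: active_length_snoc)
  qed simp
qed

lemma rexec_clone_pair:
  assumes "rexec Q I \<Delta> gs bs" "last gs = (V, E, L)" "is_config Q (V, E, L)"
    "v1 \<in> V" "v2 \<in> V" "w1 \<notin> V" "w2 \<notin> V" "w1 \<noteq> w2"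
  shows "\<exists>gs' bs'. rexec Q I \<Delta> gs' bs' \<and>
           last gs' = (insert w2 (insert w1 V), {(w1, w2), (w2, w1)}, L(w1 := L v1, w2 := L v2)) \<and>
           active_length bs' = (active_length bs)(w1 := active_length bs v1, w2 := active_length bs v2)"
proof -
  from assms(3) have "finite V" "L ` V \<subseteq> Q" by (auto simp: is_config_def)
  then have cfg1: "is_config Q (insert w1 V, {}, L(w1 := L v1))"
    using assms(4) by (auto simp: is_config_def)
  obtain gs1 bs1 where r1: "rexec Q I \<Delta> gs1 bs1" and last1: "last gs1 = (insert w1 V, {}, L(w1 := L v1))"
    and act1: "active_length bs1 = (active_length bs)(w1 := active_length bs v1)"
    using rexec_clone[OF assms(1,2,4,6) cfg1] by blast
  have L2: "(L(w1 := L v1))(w2 := (L(w1 := L v1)) v2) = L(w1 := L v1, w2 := L v2)"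
    using assms(5,6) by auto
  have "is_config Q (insert w2 (insert w1 V), {(w1, w2), (w2, w1)}, L(w1 := L v1, w2 := L v2))"
    using \<open>finite V\<close> \<open>L ` V \<subseteq> Q\<close> assms(4,5,8) by (auto simp: is_config_def sym_def irrefl_def)
  with rexec_clone[OF r1 last1, of v2 w2] assms(5-8) act1 show ?thesis
    unfolding L2 by fastforce
qed

lemma realizable_rule2:
  assumes "broadcast_protocol Q I M \<Delta>" "realizable Q I \<Delta> S n k" "rule2 \<Delta> S q"
  shows "realizable Q I \<Delta> (insert q S) (Suc (Suc n)) (Suc k)"
proof -
  obtain q1 q2 q1' m where t: "(q1, Bcast m, q2) \<in> \<Delta>" and t': "(q1', Recv m, q) \<in> \<Delta>"
    and "q1 \<in> S" "q2 \<in> S" "q1' \<in> S"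
    using assms(3) unfolding rule2_def by blast
  have "q \<in> Q" "q2 \<in> Q" using assms(1) t t' unfolding broadcast_protocol_def by blast+
  obtain gs bs V E L where r: "rexec Q I \<Delta> gs bs" and last: "last gs = (V, E, L)"
    and cfg: "is_config Q (V, E, L)" and S: "L ` V = S" and n: "card V = n"
    and act: "\<forall>v \<in> V. active_length bs v \<le> k"
    using realizableE[OF assms(2)] by blast
  from cfg have "finite V" "L ` V \<subseteq> Q" by (auto simp: is_config_def)
  obtain v1 v2 where v1: "v1 \<in> V" "L v1 = q1" and v2: "v2 \<in> V" "L v2 = q1'"
    using \<open>q1 \<in> S\<close> \<open>q1' \<in> S\<close> S by auto
  obtain w1 where w1: "w1 \<notin> V" using ex_new_if_finite[OF infinite_UNIV_nat \<open>finite V\<close>] by blast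
  obtain w2 where w2: "w2 \<notin> V" "w1 \<noteq> w2"
    using ex_new_if_finite[OF infinite_UNIV_nat finite.insertI[OF \<open>finite V\<close>, of w1]] by auto
  define V' where "V' = insert w2 (insert w1 V)"
  obtain gs' bs' where r': "rexec Q I \<Delta> gs' bs'"
    and last': "last gs' = (V', {(w1, w2), (w2, w1)}, L(w1 := q1, w2 := q1'))"
    and act': "active_length bs' = (active_length bs)(w1 := active_length bs v1, w2 := active_length bs v2)"
    using rexec_clone_pair[OF r last cfg v1(1) v2(1) w1 w2] v1 v2 unfolding V'_def by auto
  have cfg1: "is_config Q (insert w1 V, {}, L(w1 := q1))"
    and cfg2: "is_config Q (insert w1 V, {}, L(w1 := q2))"
    and cfg3: "is_config Q (V', {(w1, w2), (w2, w1)}, L(w1 := q1, w2 := q1'))"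
    and cfg4: "is_config Q (V', {}, L(w1 := q2, w2 := q))"
    using \<open>finite V\<close> \<open>L ` V \<subseteq> Q\<close> \<open>q \<in> Q\<close> \<open>q2 \<in> Q\<close> v1 v2 w2
    by (auto simp: V'_def is_config_def sym_def irrefl_def)
  have "rstep Q \<Delta> (insert w1 V, {}, L(w1 := q1)) w1 m (insert w1 V, {}, L(w1 := q2))"
    using rstep_isolated[OF cfg1, of "{}" w1 q2 m \<Delta>] cfg2 t by simp
  from rstep_add_node[OF this _ cfg3[unfolded V'_def] cfg4[unfolded V'_def]] w2 t'
  have "rstep Q \<Delta> (last gs') w1 m (V', {}, L(w1 := q2, w2 := q))"
    unfolding last' V'_def by auto
  with r' have "rexec Q I \<Delta> (gs' @ [(V', {}, L(w1 := q2, w2 := q))]) (bs' @ [w1])"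
    by (auto simp: rexec_snoc_iff)
  then show ?thesis
  proof (rule realizableI)
    show "L(w1 := q2, w2 := q) ` V' = insert q S"
      using S w1 w2 \<open>q2 \<in> S\<close> by (auto simp: V'_def)
    show "card V' = Suc (Suc n)" using \<open>finite V\<close> w1 w2 n by (simp add: V'_def)
    show "\<forall>u \<in> V'. active_length (bs' @ [w1]) u \<le> Suc k"
      using act act' v1 v2 w1 by (auto simp: V'_def active_length_snoc)
  qed simp
qed

theorem lemma3p3:
  fixes Q I :: "'q set" and M :: "'m set" and \<Delta> :: "('q \<times> 'm action \<times> 'q) set"
    and S :: "nat \<Rightarrow> 'q set" and c :: "nat \<Rightarrow> nat" and m :: nat
  assumes "broadcast_protocol Q I M \<Delta>"
    and "sat_run I \<Delta> S c m"
  shows "\<forall>i \<le> m. \<exists>gs bs. rexec Q I \<Delta> gs bs \<and>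
            labels (last gs) = S i \<and> card (nodes (gs ! 0)) = c i \<and>
            (\<forall>v \<in> nodes (gs ! 0). active_length bs v \<le> i)"
proof (intro allI impI)
  fix i assume "i \<le> m"
  then have "realizable Q I \<Delta> (S i) (c i) i"
  proof (induction i)
    case 0
    show ?case using realizable_initial[OF assms(1)] assms(2) by (simp add: sat_run_def)
  next
    case (Suc i)
    then have IH: "realizable Q I \<Delta> (S i) (c i) i" by simp
    have "sat_step \<Delta> (S i) (c i) (S (Suc i)) (c (Suc i))"
      using assms(2) Suc.prems by (simp add: sat_run_def)
    then show ?case
      unfolding sat_step_def
      using realizable_rule1[OF assms(1) IH] realizable_rule2[OF assms(1) IH] by auto
  qed
  then show "\<exists>gs bs. rexec Q I \<Delta> gs bs \<and> labels (last gs) = S i \<and> card (nodes (gs ! 0)) = c i \<and>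
      (\<forall>v \<in> nodes (gs ! 0). active_length bs v \<le> i)"
    unfolding realizable_def .
qed

end
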